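(* Let $k$ be a field and $w\in k(X)$ a non-constant rational function, viewed as a morphism $w\colon\mathbb{P}^1\to\mathbb{P}^1$, such that $k(X)/k(w)$ is separable and all ramification of $w$ is tame. Assume that $w$ has a pole of order at least $2$ at $\infty$ and that all other poles of $w$ over $\bar k$ are simple. Assume further that the numerator $g\in k[X]$ of the derivative $w'$ (written in lowest terms) is irreducible in $k[X]$ or the square of an irreducible polynomial in $k[X]$. Then $w$ is indecomposable over $k$, i.e. there are no $u,v\in k(X)$ with $\deg u>1$, $\deg v>1$ and $w=v\circ u$.
   Context: Ramification of $w$ at a point is tame if the ramification index there is not divisible by $\mathrm{char}(k)$. The degree of a rational function $u=a/b$ in lowest terms is $\max\{\deg a,\deg b\}$. *)

theory Defs
  imports "HOL-Computational_Algebra.Computational_Algebra" "HOL-Algebra.Algebraic_Closure_Type"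
begin

text \<open>A rational function in k(X) is represented by a pair (a, b) of polynomials,
  b nonzero; "in lowest terms" means coprime a b. Its degree:\<close>
definition rf_deg :: "'a::field poly \<Rightarrow> 'a poly \<Rightarrow> nat" where
  "rf_deg a b = max (degree a) (degree b)"

definition rf :: "'a::field poly \<Rightarrow> 'a poly \<Rightarrow> 'a poly fract" where
  "rf a b = Fract a b"

definition kconst :: "'a::field \<Rightarrow> 'a poly fract" where
  "kconst x = to_fract [:x:]"

definition peval :: "'a::field poly \<Rightarrow> 'a poly fract \<Rightarrow> 'a poly fract" where
  "peval c u = poly (map_poly kconst c) u"

definition rf_comp :: "'a::field poly \<Rightarrow> 'a poly \<Rightarrow> 'a poly \<Rightarrow> 'a poly \<Rightarrow> 'a poly fract" where
  "rf_comp c d a b = peval c (rf a b) / peval d (rf a b)"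

text \<open>Separability of k(X)/k(w), w = p/q: X is a root of
  Phi(T) = p(T) - w q(T) in k(w)[T], which is (up to a scalar) the minimal polynomial of X
  over k(w); the extension is separable iff this polynomial is separable, i.e. coprime to
  its derivative (coprimality does not change when passing from k(w)[T] to k(X)[T]).\<close>
definition min_poly_X :: "'a::field poly \<Rightarrow> 'a poly \<Rightarrow> 'a poly fract poly" where
  "min_poly_X p q = map_poly kconst p - smult (rf p q) (map_poly kconst q)"

definition rf_separable :: "'a::field poly \<Rightarrow> 'a poly \<Rightarrow> bool" where
  "rf_separable p q \<longleftrightarrow> coprime (min_poly_X p q) (pderiv (min_poly_X p q))"

text \<open>Ramification index of w = P/Q (lowest terms, over the algebraic closure) at a finite
  point alpha: pole order if Q(alpha) = 0, otherwise the order of vanishing of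
  w - w(alpha) at alpha.\<close>
definition ram_fin :: "'b::field poly \<Rightarrow> 'b poly \<Rightarrow> 'b \<Rightarrow> nat" where
  "ram_fin P Q \<alpha> =
     (if poly Q \<alpha> = 0 then order \<alpha> Q
      else order \<alpha> (smult (poly Q \<alpha>) P - smult (poly P \<alpha>) Q))"

definition ram_inf :: "'b::field poly \<Rightarrow> 'b poly \<Rightarrow> nat" where
  "ram_inf P Q =
     (if degree P > degree Q then degree P - degree Q
      else if degree P < degree Q then degree Q - degree P
      else degree Q - degree (smult (lead_coeff Q) P - smult (lead_coeff P) Q))"

definition tame :: "'a::field poly \<Rightarrow> 'a poly \<Rightarrow> bool" where
  "tame p q \<longleftrightarrow>
     (\<forall>\<alpha>::'a alg_closure. \<not> CHAR('a) dvd ram_fin (map_poly to_ac p) (map_poly to_ac q) \<alpha>)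
     \<and> \<not> CHAR('a) dvd ram_inf p q"

text \<open>g is a numerator of w' = (p'q - pq')/q^2 written in lowest terms.\<close>
definition deriv_numerator :: "'a::field poly \<Rightarrow> 'a poly \<Rightarrow> 'a poly \<Rightarrow> bool" where
  "deriv_numerator p q g \<longleftrightarrow>
     (\<exists>h. h \<noteq> 0 \<and> coprime g h \<and> g * q ^ 2 = h * (pderiv p * q - p * pderiv q))"

end

theory Submission
  imports Defs
begin

(* Write u = a/b and v = c/d in lowest terms and let s = deg v. Then w = v \<circ> u = C/D with
   C = b^s c(a/b) and D = b^s d(a/b) coprime, so (C, D) = \<kappa> (p, q). After a Moebius change of
   the variable one may assume deg b < deg a, and the chain rule becomes the identity
   W(C, D) = W(a, b) \<cdot> b^(2s-2) W(c, d)(a/b) for the Wronskian W(f, g) = f'g - fg'.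
   Tameness at infinity makes all degrees exact, giving 0 < deg W(a, b) < deg of the other factor.
   As q is separable, W(p, q) is the numerator of w', which is irreducible or the square of an
   irreducible polynomial and so admits no such unbalanced factorisation. *)

section \<open>Evaluation in the fraction field\<close>

lemma map_poly_add_hom:
  assumes "f 0 = 0" "\<And>x y. f (x + y) = f x + f y"
  shows "map_poly f (g + h) = map_poly f g + map_poly f h"
  by (intro poly_eqI) (simp add: coeff_map_poly assms)

lemma map_poly_mult_hom:
  fixes f :: "'a::comm_ring_1 \<Rightarrow> 'b::comm_ring_1"
  assumes zero: "f 0 = 0" and add: "\<And>x y. f (x + y) = f x + f y"
    and mult: "\<And>x y. f (x * y) = f x * f y"
  shows "map_poly f (g * h) = map_poly f g * map_poly f h"
proof (induction g)
  case (pCons c g)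
  have "map_poly f (pCons c g * h) = map_poly f (smult c h + pCons 0 (g * h))"
    by simp
  also have "\<dots> = smult (f c) (map_poly f h) + pCons 0 (map_poly f g * map_poly f h)"
    by (simp only: map_poly_add_hom[of f, OF zero add] map_poly_smult[of f, OF zero mult]
        map_poly_pCons[of f, OF zero] zero pCons.IH)
  finally show ?case
    by (simp add: map_poly_pCons[of f, OF zero])
qed simp

lemma poly_altdef_le:
  fixes p :: "'a::comm_semiring_1 poly"
  assumes "degree p \<le> N"
  shows "poly p x = (\<Sum>i\<le>N. coeff p i * x ^ i)"
  unfolding poly_altdef by (rule sum.mono_neutral_left) (auto simp: assms coeff_eq_0)

lemma kconst_0 [simp]: "kconst 0 = 0"
  by (simp add: kconst_def)

lemma kconst_add: "kconst (x + y) = kconst x + kconst y"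
  by (simp add: kconst_def flip: to_fract_add)

lemma kconst_mult: "kconst (x * y) = kconst x * kconst y"
  by (simp add: kconst_def flip: to_fract_mult)

lemma peval_0 [simp]: "peval 0 y = 0"
  by (simp add: peval_def)

lemma peval_1 [simp]: "peval 1 y = 1"
  by (simp add: peval_def kconst_def flip: one_pCons)

lemma peval_add: "peval (g + h) y = peval g y + peval h y"
  by (simp add: peval_def map_poly_add_hom kconst_add)

lemma peval_mult: "peval (g * h) y = peval g y * peval h y"
  by (simp add: peval_def map_poly_mult_hom kconst_add kconst_mult)

lemma peval_pCons: "peval (pCons c h) y = kconst c + y * peval h y"
  by (simp add: peval_def map_poly_pCons)

lemma peval_const: "peval [:k:] y = kconst k"
  using peval_pCons[of k 0 y] by simp

lemma peval_smult: "peval (smult k h) y = kconst k * peval h y"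
proof -
  have "smult k h = [:k:] * h"
    by simp
  then show ?thesis
    by (simp only: peval_mult peval_const)
qed

lemma peval_power: "peval (g ^ n) y = peval g y ^ n"
  by (induction n) (simp_all add: peval_mult)

lemma peval_sum: "peval (sum f A) y = (\<Sum>i\<in>A. peval (f i) y)"
  by (induction A rule: infinite_finite_induct) (simp_all add: peval_add)

lemma peval_altdef_le:
  assumes "degree c \<le> N"
  shows "peval c y = (\<Sum>i\<le>N. kconst (coeff c i) * y ^ i)"
  unfolding peval_def
  by (subst poly_altdef_le[where N = N])
    (use assms map_poly_degree_leq[of kconst c] in \<open>auto simp: coeff_map_poly\<close>)

lemma to_fract_eq_peval_X: "to_fract g = peval g (to_fract [:0, 1:])"
proof (induction g)
  case (pCons c g)
  have "pCons c g = [:c:] + [:0, 1:] * g"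
    by simp
  then have "to_fract (pCons c g) = kconst c + to_fract [:0, 1:] * to_fract g"
    unfolding kconst_def by (simp only: to_fract_add to_fract_mult)
  also have "\<dots> = peval (pCons c g) (to_fract [:0, 1:])"
    unfolding peval_pCons pCons.IH ..
  finally show ?case .
qed simp

section \<open>Coprimality in Euclidean rings\<close>

(* The library proves these facts in class semiring_gcd, which 'a poly instantiates only for
   coefficient types with a gcd; an abstract field has none. *)

lemma euclidean_coprime_bezout:
  fixes a b :: "'a::euclidean_ring"
  assumes "coprime a b"
  obtains x y where "x * a + y * b = 1"
proof -
  have "\<exists>x y. x * a + y * b = 1"
    using assms
  proof (induction "euclidean_size b" arbitrary: a b rule: less_induct)
    case less
    show ?case
    proof (cases "b = 0")
      case True
      then obtain k where "1 = a * k"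
        using less.prems by (auto elim: dvdE)
      then show ?thesis
        by (metis mult.commute mult_zero_left add_0_right)
    next
      case False
      then have "euclidean_size (a mod b) < euclidean_size b"
        by (rule mod_size_less)
      moreover have "coprime b (a mod b)"
        using less.prems False by (simp add: coprime_commute)
      ultimately obtain x y where "x * b + y * (a mod b) = 1"
        using less.hyps by blast
      then have "y * a + (x - y * (a div b)) * b = 1"
        by (simp add: minus_div_mult_eq_mod [symmetric] algebra_simps)
      then show ?thesis
        by blast
    qed
  qed
  with that show ?thesis
    by blast
qed

lemma euclidean_coprime_dvd_mult:
  fixes a b c :: "'a::euclidean_ring"
  assumes "coprime a c" "c dvd a * b"
  shows "c dvd b"
proof -
  obtain x y where "x * a + y * c = 1"
    using assms(1) by (rule euclidean_coprime_bezout)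
  then have "b = (x * a + y * c) * b"
    by simp
  also have "\<dots> = x * (a * b) + (y * b) * c"
    by (simp add: algebra_simps)
  also have "c dvd \<dots>"
    using assms(2) by simp
  finally show ?thesis .
qed

lemma euclidean_coprime_mult:
  fixes a b c :: "'a::euclidean_ring"
  assumes "coprime a c" "coprime b c"
  shows "coprime (a * b) c"
proof (rule coprimeI)
  fix e
  assume e: "e dvd a * b" "e dvd c"
  have "coprime a e"
    using dvd_refl e(2) assms(1) by (rule coprime_divisors)
  then have "e dvd b"
    using e(1) by (rule euclidean_coprime_dvd_mult)
  then show "is_unit e"
    using assms(2) e(2) coprime_common_divisor by blast
qed

lemma euclidean_coprime_power:
  fixes a c :: "'a::euclidean_ring"
  assumes "coprime a c"
  shows "coprime (a ^ n) c"
  by (induction n) (simp_all add: euclidean_coprime_mult assms)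

section \<open>Homogenisation\<close>

(* b^N c(a/b): the degree-N homogenisation of c, evaluated at (a, b). *)
definition homog :: "nat \<Rightarrow> 'a::comm_ring_1 poly \<Rightarrow> 'a poly \<Rightarrow> 'a poly \<Rightarrow> 'a poly" where
  "homog N c a b = (\<Sum>i\<le>N. smult (coeff c i) (a ^ i * b ^ (N - i)))"

lemma homog_0 [simp]: "homog N 0 a b = 0"
  by (simp add: homog_def)

lemma homog_add: "homog N (g + h) a b = homog N g a b + homog N h a b"
  by (simp add: homog_def smult_add_left sum.distrib)

lemma homog_diff: "homog N (g - h) a b = homog N g a b - homog N h a b"
  by (simp add: homog_def smult_diff_left sum_subtractf)

lemma homog_minus: "homog N (- g) a b = - homog N g a b"
  using homog_diff[of N 0 g a b] by simp

lemma homog_1: "homog N 1 a b = b ^ N"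
proof -
  have "homog N 1 a b = (\<Sum>i\<in>{0}. smult (coeff 1 i) (a ^ i * b ^ (N - i)))"
    unfolding homog_def by (rule sum.mono_neutral_right) auto
  then show ?thesis
    by simp
qed

lemma homog_linear: "homog 1 [:e0, e1:] a b = smult e0 b + smult e1 a"
  by (simp add: homog_def atMost_Suc)

lemma homog_X: "homog 2 [:0, 1:] a b = a * b"
  by (simp add: homog_def numeral_2_eq_2 atMost_Suc)

lemma peval_homog:
  assumes "degree c \<le> N" "peval f y \<noteq> 0"
  shows "peval (homog N c e f) y = peval f y ^ N * peval c (peval e y / peval f y)"
proof -
  have "peval (homog N c e f) y =
      (\<Sum>i\<le>N. kconst (coeff c i) * (peval e y ^ i * peval f y ^ (N - i)))"
    by (simp add: homog_def peval_sum peval_smult peval_mult peval_power)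
  also have "\<dots> = (\<Sum>i\<le>N. peval f y ^ N * (kconst (coeff c i) * (peval e y / peval f y) ^ i))"
  proof (rule sum.cong)
    fix i
    assume "i \<in> {..N}"
    then have "peval f y ^ N = peval f y ^ i * peval f y ^ (N - i)"
      by (simp flip: power_add)
    then show "kconst (coeff c i) * (peval e y ^ i * peval f y ^ (N - i)) =
        peval f y ^ N * (kconst (coeff c i) * (peval e y / peval f y) ^ i)"
      using assms(2) by (simp add: power_divide field_simps)
  qed simp
  also have "\<dots> = peval f y ^ N * peval c (peval e y / peval f y)"
    by (simp add: peval_altdef_le[OF assms(1)] sum_distrib_left)
  finally show ?thesis .
qed

lemma to_fract_homog:
  fixes a b c :: "'a::field poly"
  assumes "degree c \<le> N" "b \<noteq> 0"
  shows "to_fract (homog N c a b) = to_fract b ^ N * peval c (Fract a b)"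
  using peval_homog[OF assms(1), where y = "to_fract [:0, 1:]" and f = b and e = a] assms(2)
  by (simp add: Fract_conv_to_fract flip: to_fract_eq_peval_X)

lemma homog_mult:
  fixes a b g h :: "'a::field poly"
  assumes "degree g \<le> M" "degree h \<le> N" "b \<noteq> 0"
  shows "homog (M + N) (g * h) a b = homog M g a b * homog N h a b"
proof -
  have "degree (g * h) \<le> M + N"
    using degree_mult_le[of g h] assms by linarith
  then have "to_fract (homog (M + N) (g * h) a b) = to_fract (homog M g a b * homog N h a b)"
    using to_fract_homog[OF _ assms(3)] assms(1,2) by (simp add: peval_mult power_add)
  then show ?thesis
    by (simp only: to_fract_eq_iff)
qed

lemma homog_X_mult:
  fixes a b g :: "'a::field poly"
  assumes "degree g \<le> N" "b \<noteq> 0"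
  shows "homog (N + 2) ([:0, 1:] * g) a b = a * b * homog N g a b"
  using homog_mult[OF _ assms, of "[:0, 1:]" 2 a] by (simp add: add.commute homog_X)

lemma degree_homog_le: "degree (homog N c a b) \<le> N * max (degree a) (degree b)"
  unfolding homog_def
proof (rule degree_sum_le)
  fix i
  assume "i \<in> {..N}"
  then have "i * degree a + (N - i) * degree b \<le>
      i * max (degree a) (degree b) + (N - i) * max (degree a) (degree b)"
    by (intro add_mono mult_le_mono2) auto
  also have "\<dots> = N * max (degree a) (degree b)"
    using \<open>i \<in> {..N}\<close> by (simp flip: add_mult_distrib)
  finally show "degree (smult (coeff c i) (a ^ i * b ^ (N - i))) \<le> N * max (degree a) (degree b)"
    using degree_mult_le[of "a ^ i" "b ^ (N - i)"] degree_power_le[of a i] degree_power_le[of b "N - i"]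
      degree_smult_le[of "coeff c i" "a ^ i * b ^ (N - i)"] by (simp add: mult.commute)
qed simp

lemma degree_homog:
  fixes a b c :: "'a::idom poly"
  assumes ba: "degree b < degree a" and "b \<noteq> 0" "c \<noteq> 0" "degree c \<le> N"
  shows "degree (homog N c a b) = N * degree b + degree c * (degree a - degree b)"
proof -
  define P where "P i = smult (coeff c i) (a ^ i * b ^ (N - i))" for i
  define k where "k = degree c"
  have deg_monomial: "degree (a ^ i * b ^ (N - i)) = N * degree b + i * (degree a - degree b)"
    if "i \<le> N" for i
  proof -
    obtain j where j: "N = i + j"
      using le_Suc_ex[OF \<open>i \<le> N\<close>] by blast
    obtain t where t: "degree a = degree b + t"
      using le_Suc_ex[OF less_imp_le[OF ba]] by blast
    have "a \<noteq> 0"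
      using ba by auto
    then show ?thesis
      using \<open>b \<noteq> 0\<close> by (simp add: degree_mult_eq degree_power_eq j t algebra_simps)
  qed
  have "homog N c a b = (\<Sum>i\<le>k. P i)"
    unfolding homog_def P_def k_def
    by (rule sum.mono_neutral_right) (auto simp: \<open>degree c \<le> N\<close> coeff_eq_0)
  also have "\<dots> = (\<Sum>i<k. P i) + P k"
    by (simp add: lessThan_Suc_atMost[symmetric])
  finally have homog_eq: "homog N c a b = (\<Sum>i<k. P i) + P k" .
  have top: "degree (P k) = N * degree b + k * (degree a - degree b)"
    using deg_monomial \<open>c \<noteq> 0\<close> \<open>degree c \<le> N\<close> unfolding P_def k_def by simp
  show ?thesis
  proof (cases "k = 0")
    case True
    then show ?thesis
      using homog_eq top k_def by simp
  next
    case False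
    have "degree (\<Sum>i<k. P i) < degree (P k)"
    proof (rule degree_sum_less)
      fix i
      assume "i \<in> {..<k}"
      then have "degree (P i) \<le> N * degree b + i * (degree a - degree b)"
        using deg_monomial[of i] degree_smult_le[of "coeff c i" "a ^ i * b ^ (N - i)"]
          \<open>degree c \<le> N\<close> unfolding P_def k_def by simp
      also have "\<dots> < degree (P k)"
        using \<open>i \<in> {..<k}\<close> ba top by simp
      finally show "degree (P i) < degree (P k)" .
    qed (use top False ba in simp)
    then have "degree (homog N c a b) = degree (P k)"
      unfolding homog_eq by (rule degree_add_eq_right)
    then show ?thesis
      using top k_def by simp
  qed
qed

lemma homog_homog_linear:
  fixes a b e f g :: "'a::field poly"
  assumes "degree g \<le> N" "degree e \<le> 1" "degree f \<le> 1" "b \<noteq> 0" "homog 1 f a b \<noteq> 0"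
  shows "homog N (homog N g e f) a b = homog N g (homog 1 e a b) (homog 1 f a b)"
proof -
  define y where "y = Fract a b"
  have e: "peval e y = to_fract (homog 1 e a b) / to_fract b"
    and f: "peval f y = to_fract (homog 1 f a b) / to_fract b"
    using to_fract_homog[of _ 1 b a] assms(2-4) by (simp_all add: y_def)
  have "N * max (degree e) (degree f) \<le> N * 1"
    using assms(2,3) by (intro mult_le_mono2) simp
  then have "degree (homog N g e f) \<le> N"
    using le_trans[OF degree_homog_le[of N g e f]] by simp
  then have "to_fract (homog N (homog N g e f) a b) = to_fract b ^ N * peval (homog N g e f) y"
    using to_fract_homog assms(4) by (simp add: y_def)
  also have "\<dots> = (to_fract b * peval f y) ^ N * peval g (peval e y / peval f y)"
  proof -
    have "peval f y \<noteq> 0"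
      using f assms(4,5) by simp
    then show ?thesis
      by (simp add: peval_homog[OF assms(1)] power_mult_distrib)
  qed
  also have "\<dots> = to_fract (homog N g (homog 1 e a b) (homog 1 f a b))"
    using to_fract_homog[OF assms(1,5)] e f assms(4) by (simp add: Fract_conv_to_fract)
  finally show ?thesis
    by simp
qed

lemma coeff_homog_moebius:
  fixes c :: "'a::field poly"
  assumes "degree c \<le> s"
  shows "coeff (homog s c [:1, \<beta>:] [:0, 1:]) s = poly c \<beta>"
proof -
  have "coeff ([:1, \<beta>:] ^ i * [:0, 1:] ^ (s - i)) s = \<beta> ^ i" if "i \<le> s" for i
  proof -
    have "[:0, 1:] ^ (s - i) = monom (1::'a) (s - i)"
      by (simp add: monom_altdef)
    then show ?thesis
      using that by (simp add: mult.commute[of "[:1, \<beta>:] ^ i"] coeff_monom_mult coeff_linear_poly_power)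
  qed
  then have "coeff (homog s c [:1, \<beta>:] [:0, 1:]) s = (\<Sum>i\<le>s. coeff c i * \<beta> ^ i)"
    by (simp add: homog_def coeff_sum)
  also have "\<dots> = poly c \<beta>"
    by (rule poly_altdef_le[OF assms, symmetric])
  finally show ?thesis .
qed

lemma coprime_homog_right:
  fixes a b c :: "'a::field poly"
  assumes "coprime a b" "coeff c s \<noteq> 0"
  shows "coprime (homog s c a b) b"
proof (rule coprimeI)
  fix e
  assume e: "e dvd homog s c a b" "e dvd b"
  define R where "R = (\<Sum>i<s. smult (coeff c i) (a ^ i * b ^ (s - i)))"
  have "homog s c a b = R + smult (coeff c s) (a ^ s)"
    unfolding homog_def R_def by (simp add: lessThan_Suc_atMost[symmetric])
  moreover have "b dvd R"
    unfolding R_def by (intro dvd_sum dvd_smult dvd_mult) simp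
  then have "e dvd R"
    using e(2) by (blast intro: dvd_trans)
  ultimately have "e dvd smult (coeff c s) (a ^ s)"
    using e(1) by (simp add: dvd_add_right_iff)
  then have "e dvd a ^ s"
    using assms(2) by (rule dvd_smult_cancel)
  moreover have "coprime (a ^ s) b"
    using assms(1) by (rule euclidean_coprime_power)
  ultimately show "is_unit e"
    using e(2) coprime_common_divisor by blast
qed

lemma coprime_homog:
  fixes a b c d :: "'a::field poly"
  assumes cd: "coprime c d" and s: "s = max (degree c) (degree d)"
    and ab: "coprime a b" and "b \<noteq> 0"
  shows "coprime (homog s c a b) (homog s d a b)"
proof (rule coprimeI)
  fix e
  assume e: "e dvd homog s c a b" "e dvd homog s d a b"
  obtain x y where xy: "x * c + y * d = 1"
    using cd by (rule euclidean_coprime_bezout)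
  define M where "M = max (degree x) (degree y)"
  have "b ^ (M + s) = homog (M + s) (x * c + y * d) a b"
    by (simp add: xy homog_1)
  also have "\<dots> = homog M x a b * homog s c a b + homog M y a b * homog s d a b"
    using s \<open>b \<noteq> 0\<close> by (simp add: homog_add homog_mult M_def)
  finally have "e dvd b ^ (M + s)"
    using e by simp
  moreover have "coeff c s \<noteq> 0 \<or> coeff d s \<noteq> 0"
  proof (rule ccontr)
    assume "\<not> (coeff c s \<noteq> 0 \<or> coeff d s \<noteq> 0)"
    then have "c = 0 \<and> d = 0"
      using s by (metis degree_0 leading_coeff_neq_0 max_def max_nat.eq_neutr_iff)
    then show False
      using cd by simp
  qed
  moreover have "coprime (b ^ (M + s)) (homog s g a b)" if "coeff g s \<noteq> 0" for g
    using coprime_homog_right[OF ab that] by (intro euclidean_coprime_power) (simp add: coprime_commute)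
  ultimately show "is_unit e"
    using e by (auto intro: coprime_common_divisor)
qed

lemma reduce_by_multiple_below_degree:
  fixes a b :: "'a::field poly"
  assumes "coprime a b" "degree a \<le> degree b" "0 < degree b"
  obtains \<beta> where "a - smult \<beta> b \<noteq> 0" "degree (a - smult \<beta> b) < degree b"
proof -
  define \<beta> where "\<beta> = (if degree a = degree b then lead_coeff a / lead_coeff b else 0)"
  have "b \<noteq> 0"
    using assms(3) by auto
  have "a - smult \<beta> b \<noteq> 0"
  proof
    assume "a - smult \<beta> b = 0"
    then have "b dvd a"
      by (simp add: dvd_smult)
    then have "is_unit b"
      using assms(1) by (simp add: coprime_common_divisor)
    then show False
      using assms(3) by (auto elim: is_unit_polyE)
  qed
  moreover have "degree (a - smult \<beta> b) < degree b"
  proof (cases "degree a = degree b")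
    case True
    have "coeff (a - smult \<beta> b) (degree b) = 0"
      using True \<open>b \<noteq> 0\<close> unfolding \<beta>_def by simp
    moreover have "degree (a - smult \<beta> b) \<le> degree b"
      by (intro degree_diff_le) (simp_all add: True degree_smult_le)
    ultimately show ?thesis
      using \<open>a - smult \<beta> b \<noteq> 0\<close> by (metis le_neq_implies_less leading_coeff_0_iff)
  next
    case False
    then show ?thesis
      using assms(2) unfolding \<beta>_def by simp
  qed
  ultimately show ?thesis
    using that by blast
qed

lemma max_degree_homog_moebius:
  fixes c d :: "'a::field poly"
  assumes "coprime c d" "s = max (degree c) (degree d)"
  shows "max (degree (homog s c [:1, \<beta>:] [:0, 1:])) (degree (homog s d [:1, \<beta>:] [:0, 1:])) = s"
    (is "max (degree (?M c)) (degree (?M d)) = s")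
proof (rule antisym)
  have "max (degree [:1, \<beta>:]) (degree [:0, 1 :: 'a:]) = 1"
    by (cases "\<beta> = 0") simp_all
  then have "degree (?M g) \<le> s" for g
    using degree_homog_le[of s g "[:1, \<beta>:]" "[:0, 1:]"] by simp
  then show "max (degree (?M c)) (degree (?M d)) \<le> s"
    by simp
  have "poly c \<beta> \<noteq> 0 \<or> poly d \<beta> \<noteq> 0"
  proof (rule ccontr)
    assume "\<not> (poly c \<beta> \<noteq> 0 \<or> poly d \<beta> \<noteq> 0)"
    then have "[:- \<beta>, 1:] dvd c" "[:- \<beta>, 1:] dvd d"
      by (simp_all add: poly_eq_0_iff_dvd)
    then have "is_unit [:- \<beta>, 1:]"
      using assms(1) coprime_common_divisor by blast
    then show False
      by (auto elim: is_unit_polyE)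
  qed
  then have "coeff (?M c) s \<noteq> 0 \<or> coeff (?M d) s \<noteq> 0"
    using assms(2) by (simp add: coeff_homog_moebius)
  then show "s \<le> max (degree (?M c)) (degree (?M d))"
    using le_degree by (auto simp: le_max_iff_disj)
qed

(* If deg a \<le> deg b, replace u = a/b by the Moebius transform b/(a - \<beta> b)
   and v by v(\<beta> + 1/X). *)
lemma homog_normal_form:
  fixes a b c d :: "'a::field poly"
  assumes b: "b \<noteq> 0" and ab: "coprime a b" and cd: "coprime c d"
    and s: "s = max (degree c) (degree d)" and deg: "2 \<le> max (degree a) (degree b)"
  obtains a' b' c' d' where "b' \<noteq> 0" "degree b' < degree a'" "2 \<le> degree a'"
    "s = max (degree c') (degree d')"
    "homog s c' a' b' = homog s c a b" "homog s d' a' b' = homog s d a b"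
proof (cases "degree b < degree a")
  case True
  then show ?thesis
    using that[of b a c d] b s deg by simp
next
  case False
  then have "2 \<le> degree b"
    using deg by simp
  then have "degree a \<le> degree b" "0 < degree b"
    using False by auto
  then obtain \<beta> where b': "a - smult \<beta> b \<noteq> 0" "degree (a - smult \<beta> b) < degree b"
    by (rule reduce_by_multiple_below_degree[OF ab])
  define e f where "e = [:1, \<beta>:]" and "f = [:0, 1 :: 'a:]"
  have moebius: "homog s (homog s g e f) b (a - smult \<beta> b) = homog s g a b" if "degree g \<le> s" for g
  proof -
    have "homog 1 e b (a - smult \<beta> b) = a" "homog 1 f b (a - smult \<beta> b) = b"
      unfolding e_def f_def homog_linear by simp_all
    moreover have "homog s (homog s g e f) b (a - smult \<beta> b) =
        homog s g (homog 1 e b (a - smult \<beta> b)) (homog 1 f b (a - smult \<beta> b))"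
      by (rule homog_homog_linear[OF that]) (use calculation b b' in \<open>simp_all add: e_def f_def\<close>)
    ultimately show ?thesis
      by simp
  qed
  show ?thesis
  proof (rule that)
    show "s = max (degree (homog s c e f)) (degree (homog s d e f))"
      unfolding e_def f_def using max_degree_homog_moebius[OF cd s] by simp
    show "homog s (homog s c e f) b (a - smult \<beta> b) = homog s c a b"
      by (rule moebius) (simp add: s)
    show "homog s (homog s d e f) b (a - smult \<beta> b) = homog s d a b"
      by (rule moebius) (simp add: s)
  qed (use b' \<open>2 \<le> degree b\<close> in simp_all)
qed

section \<open>Wronskians\<close>

definition wronskian :: "'a::idom poly \<Rightarrow> 'a poly \<Rightarrow> 'a poly" where
  "wronskian f g = pderiv f * g - f * pderiv g"

lemma pderiv_sum: "pderiv (sum f A) = (\<Sum>i\<in>A. pderiv (f i))"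
  by (induction A rule: infinite_finite_induct) (simp_all add: pderiv_add)

lemma degree_pderiv_le: "degree (pderiv f) \<le> degree f - 1"
  by (rule degree_le) (auto simp: coeff_pderiv coeff_eq_0)

lemma smult_of_nat_power_pred: "smult (of_nat n) (p * p ^ (n - 1)) = smult (of_nat n) (p ^ n)"
  by (cases n) simp_all

lemma pderiv_power_mult_power:
  "a * b * pderiv (a ^ i * b ^ j) =
     smult (of_nat i) (pderiv a * b * (a ^ i * b ^ j)) + smult (of_nat j) (a * pderiv b * (a ^ i * b ^ j))"
proof -
  have "a * b * pderiv (a ^ i * b ^ j) =
     smult (of_nat j) (b * b ^ (j - 1)) * (a * pderiv b * a ^ i) +
     smult (of_nat i) (a * a ^ (i - 1)) * (pderiv a * b * b ^ j)"
    by (simp add: pderiv_mult pderiv_power algebra_simps)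
  also have "\<dots> = smult (of_nat j) (b ^ j) * (a * pderiv b * a ^ i) +
     smult (of_nat i) (a ^ i) * (pderiv a * b * b ^ j)"
    by (simp only: smult_of_nat_power_pred)
  finally show ?thesis
    by (simp add: algebra_simps)
qed

lemma coeff_pCons_0_pderiv: "coeff (pCons 0 (pderiv g)) i = of_nat i * coeff g i"
  by (cases i) (simp_all add: coeff_pderiv)

lemma degree_pCons_0_pderiv_le: "degree (pCons 0 (pderiv g)) \<le> degree g"
  by (rule degree_le) (auto simp: coeff_pCons_0_pderiv coeff_eq_0)

lemma pderiv_homog:
  assumes "degree g \<le> N"
  shows "a * b * pderiv (homog N g a b) =
    pderiv a * b * homog N (pCons 0 (pderiv g)) a b +
    a * pderiv b * homog N (smult (of_nat N) g - pCons 0 (pderiv g)) a b"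
proof -
  have "a * b * pderiv (homog N g a b) =
      (\<Sum>i\<le>N. smult (coeff g i) (a * b * pderiv (a ^ i * b ^ (N - i))))"
    by (simp add: homog_def pderiv_sum pderiv_smult sum_distrib_left)
  also have "\<dots> = (\<Sum>i\<le>N. pderiv a * b * smult (of_nat i * coeff g i) (a ^ i * b ^ (N - i)) +
      a * pderiv b * smult (of_nat N * coeff g i - of_nat i * coeff g i) (a ^ i * b ^ (N - i)))"
  proof (rule sum.cong)
    fix i
    assume "i \<in> {..N}"
    then have "of_nat N * coeff g i - of_nat i * coeff g i = of_nat (N - i) * coeff g i"
      by (simp add: of_nat_diff algebra_simps)
    then show "smult (coeff g i) (a * b * pderiv (a ^ i * b ^ (N - i))) =
      pderiv a * b * smult (of_nat i * coeff g i) (a ^ i * b ^ (N - i)) +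
      a * pderiv b * smult (of_nat N * coeff g i - of_nat i * coeff g i) (a ^ i * b ^ (N - i))"
      unfolding pderiv_power_mult_power by (simp add: smult_add_right mult_ac)
  qed simp
  also have "\<dots> = pderiv a * b * homog N (pCons 0 (pderiv g)) a b +
    a * pderiv b * homog N (smult (of_nat N) g - pCons 0 (pderiv g)) a b"
    by (simp add: homog_def sum.distrib sum_distrib_left coeff_pCons_0_pderiv)
  finally show ?thesis .
qed

(* The chain rule (v \<circ> u)' = v'(u) u', written for numerators and denominators. *)
lemma wronskian_homog:
  fixes a b c d :: "'a::field poly"
  assumes c: "degree c \<le> s" and d: "degree d \<le> s" and "a \<noteq> 0" "b \<noteq> 0" "1 \<le> s"
    and cd: "degree (wronskian c d) \<le> 2 * s - 2"
  shows "wronskian (homog s c a b) (homog s d a b) = wronskian a b * homog (2 * s - 2) (wronskian c d) a b"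
proof -
  define \<theta> where "\<theta> x = pCons 0 (pderiv x)" for x :: "'a poly"
  define H where "H x = homog s x a b" for x
  define G where "G x = homog (2 * s) x a b" for x
  have deg_\<theta>: "degree (\<theta> x) \<le> s" if "degree x \<le> s" for x
    using degree_pCons_0_pderiv_le[of x] that unfolding \<theta>_def by linarith
  have deg_\<theta>': "degree (smult (of_nat s) x - \<theta> x) \<le> s" if "degree x \<le> s" for x
    using degree_diff_le[OF order.trans[OF degree_smult_le that] deg_\<theta>[OF that]] .
  have HH: "H x * H y = G (x * y)" if "degree x \<le> s" "degree y \<le> s" for x y
    using homog_mult[OF that \<open>b \<noteq> 0\<close>, of a] unfolding H_def G_def by (simp add: mult_2)
  have dH: "a * b * pderiv (H x) =
      pderiv a * b * H (\<theta> x) + a * pderiv b * H (smult (of_nat s) x - \<theta> x)"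
    if "degree x \<le> s" for x
    using pderiv_homog[OF that] unfolding H_def \<theta>_def by simp
  have GX: "G ([:0, 1:] * wronskian c d) = a * b * homog (2 * s - 2) (wronskian c d) a b"
  proof -
    have "homog (2 * s - 2 + 2) ([:0, 1:] * wronskian c d) a b =
        a * b * homog (2 * s - 2) (wronskian c d) a b"
      by (rule homog_X_mult[OF cd \<open>b \<noteq> 0\<close>])
    moreover have "2 * s - 2 + 2 = 2 * s"
      using \<open>1 \<le> s\<close> by simp
    ultimately show ?thesis
      unfolding G_def by simp
  qed
  have G_minus: "G (- x) = - G x" for x
    unfolding G_def by (rule homog_minus)
  have \<theta>_wronskian: "\<theta> c * d - c * \<theta> d = [:0, 1:] * wronskian c d"
    unfolding \<theta>_def wronskian_def by (simp add: algebra_simps)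
  have \<theta>'_wronskian:
    "(smult (of_nat s) c - \<theta> c) * d - c * (smult (of_nat s) d - \<theta> d) =
      - ([:0, 1:] * wronskian c d)"
    unfolding \<theta>_def wronskian_def by (simp add: algebra_simps)
  have "a * b * wronskian (H c) (H d) = (a * b * pderiv (H c)) * H d - H c * (a * b * pderiv (H d))"
    unfolding wronskian_def by (simp add: algebra_simps)
  also have "\<dots> = pderiv a * b * (H (\<theta> c) * H d - H c * H (\<theta> d)) +
      a * pderiv b * (H (smult (of_nat s) c - \<theta> c) * H d - H c * H (smult (of_nat s) d - \<theta> d))"
    unfolding dH[OF c] dH[OF d] by (simp add: algebra_simps)
  also have "\<dots> = pderiv a * b * G (\<theta> c * d - c * \<theta> d) +
      a * pderiv b * G ((smult (of_nat s) c - \<theta> c) * d - c * (smult (of_nat s) d - \<theta> d))"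
    using HH deg_\<theta> deg_\<theta>' c d unfolding G_def by (simp add: homog_diff)
  also have "\<dots> = a * b * (wronskian a b * homog (2 * s - 2) (wronskian c d) a b)"
    unfolding \<theta>_wronskian \<theta>'_wronskian G_minus GX by (simp add: wronskian_def algebra_simps)
  finally show ?thesis
    using \<open>a \<noteq> 0\<close> \<open>b \<noteq> 0\<close> unfolding H_def by simp
qed

lemma wronskian_smult: "wronskian (smult k f) (smult k g) = smult (k ^ 2) (wronskian f g)"
  by (simp add: wronskian_def pderiv_smult power2_eq_square algebra_simps smult_diff_right)

lemma coeff_mult_at_degree_bounds:
  assumes "degree f \<le> m" "degree g \<le> n"
  shows "coeff (f * g) (m + n) = coeff f m * coeff g n"
proof -
  have "coeff (f * g) (m + n) = (\<Sum>i\<in>{m}. coeff f i * coeff g (m + n - i))"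
    unfolding coeff_mult
  proof (rule sum.mono_neutral_right)
    show "\<forall>i\<in>{..m + n} - {m}. coeff f i * coeff g (m + n - i) = 0"
    proof
      fix i
      assume "i \<in> {..m + n} - {m}"
      then have "i < m \<or> m < i"
        by auto
      then show "coeff f i * coeff g (m + n - i) = 0"
        using assms by (auto simp: coeff_eq_0)
    qed
  qed auto
  then show ?thesis
    by simp
qed

lemma degree_pderiv_mult_le: "degree (pderiv f * g) \<le> degree f + degree g - 1"
proof (cases "degree f = 0")
  case True
  then show ?thesis
    by (auto elim: degree_eq_zeroE simp: pderiv_pCons)
next
  case False
  then show ?thesis
    using degree_mult_le[of "pderiv f" g] degree_pderiv_le[of f] by linarith
qed

lemma degree_wronskian_le: "degree (wronskian f g) \<le> degree f + degree g - 1"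
  unfolding wronskian_def
  using degree_pderiv_mult_le[of f g] degree_pderiv_mult_le[of g f]
  by (intro degree_diff_le) (simp_all add: mult.commute add.commute)

lemma coeff_wronskian_top:
  fixes f g :: "'a::field poly"
  assumes "degree g < degree f"
  shows "coeff (wronskian f g) (degree f + degree g - 1) =
    of_nat (degree f - degree g) * lead_coeff f * lead_coeff g"
proof -
  define N where "N = degree f + degree g - 1"
  have f'g: "coeff (pderiv f * g) N = of_nat (degree f) * lead_coeff f * lead_coeff g"
    using coeff_mult_at_degree_bounds[OF degree_pderiv_le order.refl, of f g] assms
    by (simp add: N_def coeff_pderiv)
  have fg': "coeff (f * pderiv g) N = of_nat (degree g) * lead_coeff f * lead_coeff g"
  proof (cases "degree g = 0")
    case True
    then show ?thesis
      by (auto elim: degree_eq_zeroE simp: pderiv_pCons)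
  next
    case False
    then show ?thesis
      using coeff_mult_at_degree_bounds[OF order.refl degree_pderiv_le, of f g]
      by (simp add: N_def coeff_pderiv)
  qed
  show ?thesis
    unfolding N_def[symmetric] wronskian_def coeff_diff f'g fg'
    using assms by (simp add: of_nat_diff algebra_simps)
qed

lemma degree_wronskian:
  fixes f g :: "'a::field poly"
  assumes "degree g < degree f" "g \<noteq> 0" "of_nat (degree f - degree g) \<noteq> (0::'a)"
  shows "degree (wronskian f g) = degree f + degree g - 1"
proof (rule antisym)
  show "degree (wronskian f g) \<le> degree f + degree g - 1"
    by (rule degree_wronskian_le)
  have "f \<noteq> 0"
    using assms(1) by auto
  then show "degree f + degree g - 1 \<le> degree (wronskian f g)"
    using coeff_wronskian_top[OF assms(1)] assms(2,3) by (intro le_degree) simp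
qed

lemma degree_wronskian_factors:
  fixes a b c d :: "'a::field poly"
  assumes ba: "degree b < degree a" "b \<noteq> 0" and "2 \<le> degree a"
    and dc: "degree d < degree c" "d \<noteq> 0" and "2 \<le> degree c"
    and "of_nat (degree a - degree b) \<noteq> (0::'a)" "of_nat (degree c - degree d) \<noteq> (0::'a)"
  shows "0 < degree (wronskian a b)"
    and "degree (wronskian a b) < degree (homog (2 * degree c - 2) (wronskian c d) a b)"
proof -
  define s t where "s = degree c" and "t = degree a - degree b"
  have deg_ab: "degree (wronskian a b) = degree a + degree b - 1"
    using degree_wronskian ba assms(7) by blast
  then show "0 < degree (wronskian a b)"
    using \<open>2 \<le> degree a\<close> by simp
  have deg_cd: "degree (wronskian c d) = s + degree d - 1"
    using degree_wronskian[OF dc assms(8)] by (simp add: s_def)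
  then have "wronskian c d \<noteq> 0" "degree (wronskian c d) \<le> 2 * s - 2"
    using \<open>2 \<le> degree c\<close> dc by (auto simp: s_def)
  then have deg_homog: "degree (homog (2 * s - 2) (wronskian c d) a b) =
      (2 * s - 2) * degree b + (s + degree d - 1) * t"
    using degree_homog[OF ba] deg_cd by (simp add: t_def)
  have "2 * degree b \<le> (2 * s - 2) * degree b"
    using \<open>2 \<le> degree c\<close> by (intro mult_le_mono1) (simp add: s_def)
  moreover have "1 * t \<le> (s + degree d - 1) * t"
    using \<open>2 \<le> degree c\<close> by (intro mult_le_mono1) (simp add: s_def)
  ultimately show "degree (wronskian a b) < degree (homog (2 * degree c - 2) (wronskian c d) a b)"
    using deg_ab deg_homog ba(1) unfolding s_def t_def by linarith
qed

section \<open>The numerator of the derivative\<close>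

lemma map_poly_to_ac_mult: "map_poly to_ac (g * h) = map_poly to_ac g * map_poly to_ac h"
  by (rule map_poly_mult_hom) simp_all

lemma map_poly_to_ac_pderiv: "map_poly to_ac (pderiv g) = pderiv (map_poly to_ac g)"
  by (intro poly_eqI) (simp add: coeff_map_poly coeff_pderiv)

lemma rsquarefree_root_pderiv_nonzero:
  fixes Q :: "'a::idom poly"
  assumes "rsquarefree Q" "poly Q z = 0"
  shows "poly (pderiv Q) z \<noteq> 0"
proof -
  have "Q \<noteq> 0"
    using assms(1) by (simp add: rsquarefree_def)
  then obtain h where h: "Q = [:- z, 1:] ^ order z Q * h" "\<not> [:- z, 1:] dvd h"
    using order_decomp by blast
  moreover have "order z Q = 1"
    using rsquarefree_root_order[OF assms \<open>Q \<noteq> 0\<close>] .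
  ultimately have "Q = [:- z, 1:] * h"
    by simp
  then have "pderiv Q = [:- z, 1:] * pderiv h + h"
    by (simp only: pderiv_mult) (simp add: pderiv_pCons)
  then have "poly (pderiv Q) z = poly h z"
    by simp
  then show ?thesis
    using h(2) by (simp add: poly_eq_0_iff_dvd)
qed

lemma coprime_pderiv_if_rsquarefree_to_ac:
  fixes q :: "'a::field poly"
  assumes sq: "rsquarefree (map_poly (to_ac :: 'a \<Rightarrow> 'a alg_closure) q)"
  shows "coprime q (pderiv q)"
proof (rule coprimeI)
  fix e
  assume e: "e dvd q" "e dvd pderiv q"
  show "is_unit e"
  proof (rule ccontr)
    assume "\<not> is_unit e"
    have "q \<noteq> 0"
      using sq by (auto simp: rsquarefree_def)
    then have "e \<noteq> 0"
      using e(1) by auto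
    with \<open>\<not> is_unit e\<close> have "0 < degree (map_poly (to_ac :: 'a \<Rightarrow> 'a alg_closure) e)"
      by (simp add: is_unit_iff_degree map_poly_degree_eq)
    then obtain z where z: "poly (map_poly (to_ac :: 'a \<Rightarrow> 'a alg_closure) e) z = 0"
      using alg_closed_imp_poly_has_root by blast
    obtain k where "q = e * k"
      using e(1) by (elim dvdE)
    then have "poly (map_poly to_ac q) z = 0"
      using z by (simp add: map_poly_to_ac_mult)
    moreover obtain k' where "pderiv q = e * k'"
      using e(2) by (elim dvdE)
    then have "poly (pderiv (map_poly to_ac q)) z = 0"
      using z by (simp add: map_poly_to_ac_mult flip: map_poly_to_ac_pderiv)
    ultimately show False
      using rsquarefree_root_pderiv_nonzero[OF sq] by blast
  qed
qed

lemma deriv_numerator_wronskian: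
  fixes p q :: "'a::field poly"
  assumes "q \<noteq> 0" "coprime p q" "coprime q (pderiv q)"
  shows "deriv_numerator p q (wronskian p q)"
proof -
  have "coprime (wronskian p q) q"
  proof (rule coprimeI)
    fix e
    assume e: "e dvd wronskian p q" "e dvd q"
    then have "e dvd pderiv p * q - wronskian p q"
      by (simp add: dvd_diff)
    then have "e dvd p * pderiv q"
      by (simp add: wronskian_def)
    moreover have "coprime p e"
      using dvd_refl e(2) assms(2) by (rule coprime_divisors)
    ultimately have "e dvd pderiv q"
      by (rule euclidean_coprime_dvd_mult[rotated])
    then show "is_unit e"
      using assms(3) e(2) coprime_common_divisor by blast
  qed
  then have "coprime (wronskian p q) (q ^ 2)"
    using euclidean_coprime_power[of q "wronskian p q" 2] by (simp add: coprime_commute)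
  moreover have "wronskian p q * q ^ 2 = q ^ 2 * (pderiv p * q - p * pderiv q)"
    by (simp add: wronskian_def)
  ultimately show ?thesis
    unfolding deriv_numerator_def using assms(1) by (intro exI[of _ "q ^ 2"]) simp
qed

section \<open>Decompositions\<close>

lemma rf_comp_eq_homog:
  fixes a b c d :: "'a::field poly"
  assumes "b \<noteq> 0" "degree c \<le> s" "degree d \<le> s"
  shows "rf_comp c d a b = rf (homog s c a b) (homog s d a b)"
proof -
  define B where "B = to_fract b ^ s"
  have "B \<noteq> 0"
    using assms(1) by (simp add: B_def)
  have peval_eq: "peval g (Fract a b) = to_fract (homog s g a b) / B" if "degree g \<le> s" for g
  proof -
    have "to_fract (homog s g a b) = B * peval g (Fract a b)"
      unfolding B_def by (rule to_fract_homog[OF that assms(1)])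
    then show ?thesis
      using \<open>B \<noteq> 0\<close> by (simp add: nonzero_eq_divide_eq mult.commute)
  qed
  have div_cancel: "(x / B) / (y / B) = x / y" for x y
    using \<open>B \<noteq> 0\<close> by (cases "y = 0") simp_all
  show ?thesis
    unfolding rf_comp_def rf_def peval_eq[OF assms(2)] peval_eq[OF assms(3)] div_cancel
    by (simp add: Fract_conv_to_fract)
qed

lemma rf_lowest_terms_unique:
  fixes p q C D :: "'a::field poly"
  assumes eq: "rf p q = rf C D" and "coprime p q" "coprime C D" "p \<noteq> 0" "q \<noteq> 0"
  obtains \<kappa> where "\<kappa> \<noteq> 0" "C = smult \<kappa> p" "D = smult \<kappa> q"
proof -
  have "D \<noteq> 0"
    using eq \<open>p \<noteq> 0\<close> \<open>q \<noteq> 0\<close> by (auto simp: rf_def Zero_fract_def eq_fract)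
  then have "p * D = q * C"
    using eq \<open>q \<noteq> 0\<close> by (simp add: rf_def eq_fract mult.commute)
  then have "p dvd q * C"
    by (simp flip: \<open>p * D = q * C\<close>)
  moreover have "coprime q p"
    using \<open>coprime p q\<close> by (simp add: coprime_commute)
  ultimately have "p dvd C"
    by (rule euclidean_coprime_dvd_mult[rotated])
  then obtain t where C: "C = p * t"
    by (elim dvdE)
  with \<open>p * D = q * C\<close> \<open>p \<noteq> 0\<close> have D: "D = q * t"
    by (simp add: algebra_simps)
  have "is_unit t"
    using \<open>coprime C D\<close> unfolding C D by (rule coprime_common_divisor) simp_all
  then obtain \<kappa> where "t = [:\<kappa>:]" "\<kappa> dvd 1"
    by (auto simp: is_unit_poly_iff)
  then have "\<kappa> \<noteq> 0"
    by auto
  with C D \<open>t = [:\<kappa>:]\<close> show ?thesis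
    using that by simp
qed

lemma homog_decomposition_splits_wronskian:
  fixes p q a b c d :: "'a::field poly"
  assumes b: "b \<noteq> 0" and ba: "degree b < degree a" and a2: "2 \<le> degree a"
    and s: "s = max (degree c) (degree d)" and s2: "2 \<le> s"
    and C: "homog s c a b = smult \<kappa> p" and D: "homog s d a b = smult \<kappa> q" and "\<kappa> \<noteq> 0"
    and "q \<noteq> 0" and qp: "degree q < degree p" and tame: "\<not> CHAR('a) dvd (degree p - degree q)"
  obtains U R where "U * R = smult (\<kappa> ^ 2) (wronskian p q)" "0 < degree U" "degree U < degree R"
proof -
  define t where "t = degree a - degree b"
  have "p \<noteq> 0" "a \<noteq> 0"
    using qp ba by auto
  have "c \<noteq> 0" "d \<noteq> 0"
    using C D \<open>p \<noteq> 0\<close> \<open>q \<noteq> 0\<close> \<open>\<kappa> \<noteq> 0\<close> by auto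
  have "degree c \<le> s" "degree d \<le> s"
    using s by auto
  have deg_p: "degree p = s * degree b + degree c * t"
    using degree_homog[OF ba b \<open>c \<noteq> 0\<close> \<open>degree c \<le> s\<close>] C \<open>\<kappa> \<noteq> 0\<close> by (simp add: t_def)
  have deg_q: "degree q = s * degree b + degree d * t"
    using degree_homog[OF ba b \<open>d \<noteq> 0\<close> \<open>degree d \<le> s\<close>] D \<open>\<kappa> \<noteq> 0\<close> by (simp add: t_def)
  have "degree d < degree c"
    using qp unfolding deg_p deg_q by simp
  then have "degree c = s"
    using s by simp
  have "degree p - degree q = (degree c - degree d) * t"
    unfolding deg_p deg_q by (simp add: diff_mult_distrib)
  then have "of_nat (degree c - degree d) * of_nat t \<noteq> (0::'a)"
    using tame by (simp flip: of_nat_mult add: of_nat_eq_0_iff_char_dvd)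
  then have char: "of_nat (degree a - degree b) \<noteq> (0::'a)" "of_nat (degree c - degree d) \<noteq> (0::'a)"
    by (auto simp: t_def)
  have "degree (wronskian c d) \<le> 2 * s - 2"
    using degree_wronskian_le[of c d] \<open>degree d < degree c\<close> \<open>degree c = s\<close> by linarith
  then have "wronskian a b * homog (2 * s - 2) (wronskian c d) a b =
      wronskian (homog s c a b) (homog s d a b)"
    using wronskian_homog[OF \<open>degree c \<le> s\<close> \<open>degree d \<le> s\<close> \<open>a \<noteq> 0\<close> b] s2 by simp
  also have "\<dots> = smult (\<kappa> ^ 2) (wronskian p q)"
    unfolding C D by (rule wronskian_smult)
  finally show ?thesis
    using that degree_wronskian_factors[OF ba b a2 \<open>degree d < degree c\<close> \<open>d \<noteq> 0\<close> _ char]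
      s2 \<open>degree c = s\<close> by auto
qed

lemma decomposition_splits_wronskian:
  fixes p q a b c d :: "'a::field poly"
  assumes "q \<noteq> 0" "coprime p q" "degree q < degree p"
    and tame: "\<not> CHAR('a) dvd (degree p - degree q)"
    and b: "b \<noteq> 0" and ab: "coprime a b" and cd: "coprime c d"
    and "1 < rf_deg a b" "1 < rf_deg c d" and w: "rf p q = rf_comp c d a b"
  obtains \<kappa> U R
  where "\<kappa> \<noteq> 0" "U * R = smult \<kappa> (wronskian p q)" "0 < degree U" "degree U < degree R"
proof -
  define s where "s = max (degree c) (degree d)"
  have "p \<noteq> 0"
    using \<open>degree q < degree p\<close> by auto
  have "rf p q = rf (homog s c a b) (homog s d a b)"
    using w rf_comp_eq_homog[OF b] by (simp add: s_def)
  then obtain \<kappa> where "\<kappa> \<noteq> 0" and C: "homog s c a b = smult \<kappa> p" and D: "homog s d a b = smult \<kappa> q"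
    using \<open>coprime p q\<close> coprime_homog[OF cd s_def ab b] \<open>p \<noteq> 0\<close> \<open>q \<noteq> 0\<close>
    by (rule rf_lowest_terms_unique)
  have "2 \<le> max (degree a) (degree b)"
    using \<open>1 < rf_deg a b\<close> by (simp add: rf_deg_def)
  obtain a' b' c' d' where "b' \<noteq> 0" "degree b' < degree a'" "2 \<le> degree a'"
    "s = max (degree c') (degree d')" "homog s c' a' b' = homog s c a b" "homog s d' a' b' = homog s d a b"
    by (rule homog_normal_form[OF b ab cd s_def \<open>2 \<le> max (degree a) (degree b)\<close>])
  moreover have "2 \<le> s"
    using \<open>1 < rf_deg c d\<close> by (simp add: s_def rf_deg_def)
  ultimately obtain U R
    where "U * R = smult (\<kappa> ^ 2) (wronskian p q)" "0 < degree U" "degree U < degree R"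
    using homog_decomposition_splits_wronskian[of b' a' s c' d' \<kappa> p q] C D \<open>\<kappa> \<noteq> 0\<close> \<open>q \<noteq> 0\<close>
      \<open>degree q < degree p\<close> tame
    by auto
  with \<open>\<kappa> \<noteq> 0\<close> show ?thesis
    using that[of "\<kappa> ^ 2"] by simp
qed

lemma unit_if_dvd_prime_elem_power:
  fixes a p :: "'a::algebraic_semidom"
  assumes "prime_elem p" "\<not> p dvd a"
  shows "a dvd p ^ k \<Longrightarrow> is_unit a"
proof (induction k)
  case (Suc k)
  then obtain r where r: "p * p ^ k = a * r"
    by (auto elim: dvdE)
  then have "p dvd a * r"
    by (simp flip: r)
  then have "p dvd r"
    using assms prime_elem_dvd_mult_iff by blast
  then obtain r' where "r = p * r'"
    by (elim dvdE)
  with r have "p ^ k = a * r'"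
    using assms(1) by (simp add: prime_elem_def mult.left_commute[of a])
  then show ?case
    using Suc.IH by simp
qed simp

lemma smaller_factor_of_irreducible_square_const:
  fixes h u U R :: "'a::field poly"
  assumes h: "irreducible h" and "k \<le> 2" "is_unit u"
    and UR: "U * R = u * h ^ k" and deg: "degree U < degree R"
  shows "degree U = 0"
proof -
  have "h \<noteq> 0"
    using h by (simp add: irreducible_def)
  have "u \<noteq> 0" "degree u = 0"
    using \<open>is_unit u\<close> by (auto elim: is_unit_polyE)
  have "U * R \<noteq> 0"
    unfolding UR using \<open>u \<noteq> 0\<close> \<open>h \<noteq> 0\<close> by simp
  then have "degree U + degree R = k * degree h"
    using UR \<open>h \<noteq> 0\<close> \<open>u \<noteq> 0\<close> \<open>degree u = 0\<close> by (metis degree_mult_eq degree_power_eq mult_eq_0_iff add_0)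
  then have "degree U < degree h"
    using deg \<open>k \<le> 2\<close> mult_le_mono1[of k 2 "degree h"] by linarith
  then have "\<not> h dvd U"
    using \<open>U * R \<noteq> 0\<close> by (auto dest: dvd_imp_degree_le)
  moreover have "U dvd h ^ k"
    using \<open>is_unit u\<close> dvd_triv_left[of U R] unfolding UR by (simp add: dvd_mult_unit_iff')
  ultimately have "is_unit U"
    using field_poly_irreducible_imp_prime[OF h] unit_if_dvd_prime_elem_power by blast
  then show ?thesis
    by (auto elim: is_unit_polyE)
qed

theorem mainTheorem9:
  fixes p q :: "'a::field poly"
  assumes "q \<noteq> 0" and "coprime p q"
    and "rf_deg p q \<ge> 1"
    and "rf_separable p q"
    and "tame p q"
    and "degree p \<ge> degree q + 2"
    and "rsquarefree (map_poly (to_ac :: 'a \<Rightarrow> 'a alg_closure) q)"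
    and "\<And>g. deriv_numerator p q g \<Longrightarrow>
           irreducible g \<or> (\<exists>h u. irreducible h \<and> is_unit u \<and> g = u * h ^ 2)"
  shows "\<not> (\<exists>a b c d :: 'a poly. b \<noteq> 0 \<and> coprime a b \<and> d \<noteq> 0 \<and> coprime c d \<and>
              rf_deg a b > 1 \<and> rf_deg c d > 1 \<and> rf p q = rf_comp c d a b)"
proof
  assume "\<exists>a b c d :: 'a poly. b \<noteq> 0 \<and> coprime a b \<and> d \<noteq> 0 \<and> coprime c d \<and>
              rf_deg a b > 1 \<and> rf_deg c d > 1 \<and> rf p q = rf_comp c d a b"
  moreover have "degree q < degree p"
    using assms(6) by simp
  moreover have "\<not> CHAR('a) dvd (degree p - degree q)"
    using assms(5) \<open>degree q < degree p\<close> by (simp add: tame_def ram_inf_def)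
  ultimately obtain \<kappa> U R where "\<kappa> \<noteq> 0" and UR: "U * R = smult \<kappa> (wronskian p q)"
    and "0 < degree U" "degree U < degree R"
    using decomposition_splits_wronskian[OF assms(1,2)] by blast
  have "deriv_numerator p q (wronskian p q)"
    using assms(1,2) coprime_pderiv_if_rsquarefree_to_ac[OF assms(7)] by (rule deriv_numerator_wronskian)
  then have "irreducible (wronskian p q) \<or> (\<exists>h u. irreducible h \<and> is_unit u \<and> wronskian p q = u * h ^ 2)"
    by (rule assms(8))
  then obtain h u and k :: nat where "irreducible h" "is_unit u" "k \<le> 2" "wronskian p q = u * h ^ k"
  proof (elim disjE exE conjE)
    assume "irreducible (wronskian p q)"
    then show ?thesis
      using that[of "wronskian p q" 1 1] by simp
  qed (use that in blast)
  have "is_unit ([:\<kappa>:] * u)"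
    using \<open>\<kappa> \<noteq> 0\<close> \<open>is_unit u\<close> by (intro unit_prod is_unit_triv)
  moreover have "U * R = ([:\<kappa>:] * u) * h ^ k"
    using UR \<open>wronskian p q = u * h ^ k\<close> by simp
  ultimately have "degree U = 0"
    using \<open>irreducible h\<close> \<open>k \<le> 2\<close> \<open>degree U < degree R\<close> smaller_factor_of_irreducible_square_const
    by blast
  with \<open>0 < degree U\<close> show False
    by simp
qed

end
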